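(* Let $\sigma=(\sigma_n)_{n\in\mathbb{N}}$ be an increasing sequence of positive integers, let $\gamma$ be a positive integer, and define $\tau_n=\sigma_{\gamma n}$. Then a nonnegative random variable $W$ is $\sigma$-summable if and only if it is $\tau$-summable.
   Context: Let $W$ be a nonnegative random variable and $\sigma=(\sigma_n)_{n\in\mathbb{N}}$ a sequence of positive integers (or reals $\ge 1$). Let $(W_n^j)_{n,j\in\mathbb{N}}$ be independent copies of $W$ and $\Lambda_n=\min_{1\le j\le\sigma_n}W_n^j$. $W$ is called $\sigma$-summable if $\Pr\{\sum_n\Lambda_n<\infty\}>0$. *)

theory Defs
  imports "HOL-Probability.Probability"
begin

text \<open>The law of W is a probability measure mu on the reals. Independent copies
  (W_n^j) of W are realised canonically as the coordinates of the infinite product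
  measure of mu over the index set nat x nat.\<close>

definition iid_copies :: "real measure \<Rightarrow> (nat \<times> nat \<Rightarrow> real) measure" where
  "iid_copies mu = PiM UNIV (\<lambda>_. mu)"

definition Lambda :: "(nat \<Rightarrow> nat) \<Rightarrow> (nat \<times> nat \<Rightarrow> real) \<Rightarrow> nat \<Rightarrow> real" where
  "Lambda \<sigma> \<omega> n = Min ((\<lambda>j. \<omega> (n, j)) ` {1..\<sigma> n})"

definition summable_wrt :: "real measure \<Rightarrow> (nat \<Rightarrow> nat) \<Rightarrow> bool" where
  "summable_wrt mu \<sigma> \<longleftrightarrow>
     measure (iid_copies mu) {\<omega> \<in> space (iid_copies mu).
        (\<Sum>n. ennreal (Lambda \<sigma> \<omega> n)) < \<infinity>} > 0"

end

theory Submission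
  imports Defs
begin

(* Write tau n = sigma (gamma * n), and realise the copies W_n^j as the
   coordinates of the i.i.d. array omega on nat x nat.  For each residue k < gamma let
   block_shift gamma k map (m, j) to (gamma*m + k, j); the reindexed array omega o
   block_shift gamma k again has the i.i.d. law, and for different k these arrays use
   disjoint sets of coordinates, hence are independent.
   (=>) Lambda_tau(omega o block_shift gamma 0) is the subsequence Lambda_sigma(omega)(gamma m),
        so its sum is dominated by the full sum; the law is preserved by the reindexing.
   (<=) Split sum_n Lambda_sigma(omega)(n) into the gamma residue classes mod gamma.  Since
        sigma is monotone, Lambda_sigma(omega)(gamma m + k) <= Lambda_tau(omega o block_shift
        gamma k)(m) (a minimum over more variables is smaller).  So sum_n Lambda_sigma < oo
        on the intersection of the gamma independent events "tau-sum of the k-th reindexed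
        array is finite", which has probability P(tau-event)^gamma > 0.
   The file proves two facts on series in ennreal, then the measure-preserving and
   independence properties of reindexing the i.i.d. array, then the two directions. *)

lemma suminf_reindex_inj_le:
  fixes g :: "nat \<Rightarrow> ennreal" and h :: "nat \<Rightarrow> nat"
  assumes "inj h"
  shows "(\<Sum>m. g (h m)) \<le> (\<Sum>n. g n)"
proof (rule suminf_le_const[OF summableI])
  fix N
  have "(\<Sum>m<N. g (h m)) = sum g (h ` {..<N})"
    using inj_on_subset[OF assms] by (simp add: sum.reindex)
  also have "\<dots> \<le> (\<Sum>n. g n)"
    by (intro sum_le_suminf) auto
  finally show "(\<Sum>m<N. g (h m)) \<le> (\<Sum>n. g n)" .
qed

lemma suminf_le_sum_residue_classes:
  fixes g :: "nat \<Rightarrow> ennreal" and c :: nat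
  assumes "c \<ge> 1"
  shows "(\<Sum>n. g n) \<le> (\<Sum>k<c. \<Sum>m. g (c * m + k))"
proof (rule suminf_le_const[OF summableI])
  fix N
  let ?split = "\<lambda>(k, m). c * m + k"
  have cover: "{..<N} \<subseteq> ?split ` ({..<c} \<times> {..<N})"
  proof
    fix n assume "n \<in> {..<N}"
    then have "n div c < N"
      by (metis div_le_dividend le_less_trans lessThan_iff)
    moreover have "n mod c < c" "n = c * (n div c) + n mod c"
      using assms by simp_all
    ultimately show "n \<in> ?split ` ({..<c} \<times> {..<N})" by force
  qed
  have inj: "inj_on ?split ({..<c} \<times> {..<N})"
  proof (rule inj_onI, clarsimp)
    fix k m k' m' assume "k < c" "k' < c" "c * m + k = c * m' + k'"
    then have "(c * m + k) mod c = (c * m' + k') mod c"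
      and "(c * m + k) div c = (c * m' + k') div c" by simp_all
    with \<open>k < c\<close> \<open>k' < c\<close> show "k = k' \<and> m = m'" by simp
  qed
  have "sum g {..<N} \<le> sum g (?split ` ({..<c} \<times> {..<N}))"
    by (rule sum_mono2[OF _ cover]) auto
  also have "\<dots> = (\<Sum>(k, m)\<in>{..<c} \<times> {..<N}. g (c * m + k))"
    by (subst sum.reindex[OF inj]) (simp add: case_prod_beta)
  also have "\<dots> = (\<Sum>k<c. \<Sum>m<N. g (c * m + k))"
    by (simp add: sum.cartesian_product)
  also have "\<dots> \<le> (\<Sum>k<c. \<Sum>m. g (c * m + k))"
    by (intro sum_mono sum_le_suminf) auto
  finally show "sum g {..<N} \<le> (\<Sum>k<c. \<Sum>m. g (c * m + k))" .
qed

lemma prob_space_iid_copies: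
  assumes "prob_space mu"
  shows "prob_space (iid_copies mu)"
  unfolding iid_copies_def using assms by (intro prob_space_PiM) auto

lemma reindex_measurable:
  "(\<lambda>\<omega>. \<omega> \<circ> f) \<in> measurable (iid_copies mu) (iid_copies mu)"
  unfolding iid_copies_def comp_def
  by (rule measurable_PiM_single') (auto simp: space_PiM)

lemma reindex_preserves_measure:
  assumes "prob_space mu" "inj f" "A \<in> sets (iid_copies mu)"
  shows "measure (iid_copies mu) ((\<lambda>\<omega>. \<omega> \<circ> f) -` A \<inter> space (iid_copies mu))
       = measure (iid_copies mu) A"
proof -
  have "distr (iid_copies mu) (iid_copies mu) (\<lambda>\<omega>. \<omega> \<circ> f) = iid_copies mu"
    using distr_PiM_reindex[where K=UNIV and M="\<lambda>_. mu" and f=f and I=UNIV] assms(1,2)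
    unfolding iid_copies_def by (simp add: restrict_UNIV comp_def)
  then show ?thesis
    using measure_distr[OF reindex_measurable[where mu=mu and f=f], of A] assms(3) by simp
qed

lemma coordinates_indep:
  assumes "prob_space mu"
  shows "prob_space.indep_vars (iid_copies mu) (\<lambda>_. mu) (\<lambda>i \<omega>. \<omega> i) UNIV"
proof -
  interpret P: prob_space "iid_copies mu"
    using assms by (rule prob_space_iid_copies)
  have "distr (iid_copies mu) mu (\<lambda>\<omega>. \<omega> i) = mu" for i
    unfolding iid_copies_def using assms by (intro distr_PiM_component) auto
  then show ?thesis
    by (intro P.indep_vars_iff_distr_eq_PiM[THEN iffD2])
       (auto simp: restrict_UNIV iid_copies_def)
qed

text \<open>Arrays obtained by reindexing along maps with pairwise disjoint ranges are
  independent, since they are functions of disjoint sets of coordinates.\<close>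
lemma reindex_disjoint_indep:
  assumes "prob_space mu" and disj: "disjoint_family_on (\<lambda>k. range (f k)) L"
  shows "prob_space.indep_vars (iid_copies mu) (\<lambda>_. iid_copies mu) (\<lambda>k \<omega>. \<omega> \<circ> f k) L"
proof -
  interpret P: prob_space "iid_copies mu"
    using assms(1) by (rule prob_space_iid_copies)
  have "P.indep_vars (\<lambda>k. PiM (range (f k)) (\<lambda>_. mu))
      (\<lambda>k \<omega>. restrict \<omega> (range (f k))) L"
    by (rule P.indep_vars_restrict[OF coordinates_indep[OF assms(1)] _ disj]) auto
  then have composed: "P.indep_vars (\<lambda>_. iid_copies mu)
      (\<lambda>k \<omega>. (\<lambda>x p. x (f k p)) (restrict \<omega> (range (f k)))) L"
  proof (rule P.indep_vars_compose2)
    show "(\<lambda>x p. x (f k p)) \<in> measurable (PiM (range (f k)) (\<lambda>_. mu)) (iid_copies mu)" for k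
      unfolding iid_copies_def
      by (rule measurable_PiM_single') (auto simp: space_PiM)
  qed
  have restrict_comp: "(\<lambda>k \<omega>. (\<lambda>x p. x (f k p)) (restrict \<omega> (range (f k))))
      = (\<lambda>k \<omega>. \<omega> \<circ> f k)"
    by (auto simp: fun_eq_iff)
  show ?thesis using composed unfolding restrict_comp .
qed

definition summable_event :: "real measure \<Rightarrow> (nat \<Rightarrow> nat) \<Rightarrow> (nat \<times> nat \<Rightarrow> real) set" where
  "summable_event mu \<sigma> =
     {\<omega> \<in> space (iid_copies mu). (\<Sum>n. ennreal (Lambda \<sigma> \<omega> n)) < \<infinity>}"

lemma summable_wrt_iff_event:
  "summable_wrt mu \<sigma> \<longleftrightarrow> measure (iid_copies mu) (summable_event mu \<sigma>) > 0"
  unfolding summable_wrt_def summable_event_def ..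

lemma summable_event_sets:
  assumes "sets mu = sets borel"
  shows "summable_event mu \<sigma> \<in> sets (iid_copies mu)"
proof -
  have "(\<lambda>\<omega>. \<omega> (n, j)) \<in> borel_measurable (iid_copies mu)" for n j
    unfolding iid_copies_def
    by (subst measurable_cong_sets[OF refl assms, symmetric])
       (rule measurable_component_singleton, simp)
  then have "(\<lambda>\<omega>. Lambda \<sigma> \<omega> n) \<in> borel_measurable (iid_copies mu)" for n
    unfolding Lambda_def by (intro borel_measurable_Min) auto
  then show ?thesis
    unfolding summable_event_def by measurable
qed

lemma reindex_summable_event:
  assumes "prob_space mu" "sets mu = sets borel" "inj f"
  shows "(\<lambda>\<omega>. \<omega> \<circ> f) -` summable_event mu \<sigma> \<inter> space (iid_copies mu) \<in> sets (iid_copies mu)"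
    and "measure (iid_copies mu) ((\<lambda>\<omega>. \<omega> \<circ> f) -` summable_event mu \<sigma> \<inter> space (iid_copies mu))
       = measure (iid_copies mu) (summable_event mu \<sigma>)"
  using measurable_sets[OF reindex_measurable summable_event_sets[OF assms(2)]]
    reindex_preserves_measure[OF assms(1,3) summable_event_sets[OF assms(2)]]
  by simp_all

definition block_shift :: "nat \<Rightarrow> nat \<Rightarrow> nat \<times> nat \<Rightarrow> nat \<times> nat" where
  "block_shift \<gamma> k = (\<lambda>(m, j). (\<gamma> * m + k, j))"

lemma inj_block_shift:
  assumes "\<gamma> \<ge> 1"
  shows "inj (block_shift \<gamma> k)"
  using assms by (auto simp: block_shift_def intro!: injI)

lemma block_shift_disjoint:
  "disjoint_family_on (\<lambda>k. range (block_shift \<gamma> k)) {..<\<gamma>}"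
proof -
  have "k = k'" if "k < \<gamma>" "k' < \<gamma>" "\<gamma> * m + k = \<gamma> * m' + k'" for k k' m m' :: nat
  proof -
    have "(\<gamma> * m + k) mod \<gamma> = (\<gamma> * m' + k') mod \<gamma>" using that(3) by simp
    with that(1,2) show "k = k'" by simp
  qed
  then show ?thesis
    unfolding disjoint_family_on_def block_shift_def by fastforce
qed

lemma Lambda_block_shift_0:
  "Lambda (\<lambda>n. \<sigma> (\<gamma> * n)) (\<omega> \<circ> block_shift \<gamma> 0) m = Lambda \<sigma> \<omega> (\<gamma> * m)"
  by (simp add: Lambda_def block_shift_def)

text \<open>For monotone \<open>\<sigma>\<close>, row \<open>\<gamma> * m + k\<close> has at least \<open>\<sigma> (\<gamma> * m)\<close> copies, so its
  minimum is at most the minimum over the first \<open>\<sigma> (\<gamma> * m)\<close> of them.\<close>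
lemma Lambda_le_block_shift:
  assumes "mono \<sigma>" "\<And>n. \<sigma> n \<ge> 1"
  shows "Lambda \<sigma> \<omega> (\<gamma> * m + k) \<le> Lambda (\<lambda>n. \<sigma> (\<gamma> * n)) (\<omega> \<circ> block_shift \<gamma> k) m"
proof -
  have "\<sigma> (\<gamma> * m) \<le> \<sigma> (\<gamma> * m + k)" using assms(1) by (simp add: monoD)
  with assms(2)[of "\<gamma> * m"] show ?thesis
    unfolding Lambda_def block_shift_def by (intro Min_antimono) auto
qed

text \<open>\<open>\<sigma>\<close>-summability implies summability along the thinned sequence.\<close>
lemma summable_wrt_thinned:
  assumes "prob_space mu" "sets mu = sets borel" "\<gamma> \<ge> 1"
    and "summable_wrt mu \<sigma>"
  shows "summable_wrt mu (\<lambda>n. \<sigma> (\<gamma> * n))"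
proof -
  interpret P: prob_space "iid_copies mu"
    using assms(1) by (rule prob_space_iid_copies)
  define A where "A = (\<lambda>\<omega>. \<omega> \<circ> block_shift \<gamma> 0) -`
      summable_event mu (\<lambda>n. \<sigma> (\<gamma> * n)) \<inter> space (iid_copies mu)"
  note A = reindex_summable_event[OF assms(1,2) inj_block_shift[OF assms(3), of 0],
      where \<sigma>="\<lambda>n. \<sigma> (\<gamma> * n)", folded A_def]
  have "summable_event mu \<sigma> \<subseteq> A"
  proof
    fix \<omega> assume \<omega>: "\<omega> \<in> summable_event mu \<sigma>"
    have "(\<Sum>m. ennreal (Lambda (\<lambda>n. \<sigma> (\<gamma> * n)) (\<omega> \<circ> block_shift \<gamma> 0) m))
        = (\<Sum>m. ennreal (Lambda \<sigma> \<omega> (\<gamma> * m)))"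
      by (simp add: Lambda_block_shift_0)
    also have "\<dots> \<le> (\<Sum>n. ennreal (Lambda \<sigma> \<omega> n))"
      using assms(3) by (intro suminf_reindex_inj_le) (auto intro: injI)
    also have "\<dots> < \<infinity>" using \<omega> by (simp add: summable_event_def)
    finally show "\<omega> \<in> A"
      using \<omega> measurable_space[OF reindex_measurable]
      by (auto simp: A_def summable_event_def)
  qed
  then have "measure (iid_copies mu) (summable_event mu \<sigma>) \<le> measure (iid_copies mu) A"
    using A(1) by (rule P.finite_measure_mono)
  then show ?thesis
    using assms(4) A(2) by (simp add: summable_wrt_iff_event)
qed

text \<open>Conversely, for monotone \<open>\<sigma>\<close> the \<open>\<sigma>\<close>-event contains the intersection of \<open>\<gamma>\<close>
  independent reindexed copies of the thinned event.\<close>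
lemma summable_wrt_from_thinned:
  assumes "prob_space mu" "sets mu = sets borel" "\<gamma> \<ge> 1"
    and "mono \<sigma>" "\<And>n. \<sigma> n \<ge> 1"
    and "summable_wrt mu (\<lambda>n. \<sigma> (\<gamma> * n))"
  shows "summable_wrt mu \<sigma>"
proof -
  interpret P: prob_space "iid_copies mu"
    using assms(1) by (rule prob_space_iid_copies)
  define \<tau> where "\<tau> = (\<lambda>n. \<sigma> (\<gamma> * n))"
  define A where "A k = (\<lambda>\<omega>. \<omega> \<circ> block_shift \<gamma> k) -` summable_event mu \<tau>
      \<inter> space (iid_copies mu)" for k
  note A = reindex_summable_event[OF assms(1,2) inj_block_shift[OF assms(3)],
      where \<sigma>=\<tau>, folded A_def]
  have nonempty: "{..<\<gamma>} \<noteq> {}" using assms(3) by (auto simp: lessThan_empty_iff)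
  have "measure (iid_copies mu) (\<Inter>k<\<gamma>. A k) = (\<Prod>k<\<gamma>. measure (iid_copies mu) (A k))"
    unfolding A_def
    by (rule P.indep_varsD[OF reindex_disjoint_indep[OF assms(1) block_shift_disjoint]])
       (use nonempty summable_event_sets[OF assms(2)] in auto)
  also have "\<dots> = measure (iid_copies mu) (summable_event mu \<tau>) ^ \<gamma>"
    by (simp add: A(2))
  finally have pos: "measure (iid_copies mu) (\<Inter>k<\<gamma>. A k) > 0"
    using assms(6) by (simp add: \<tau>_def summable_wrt_iff_event)
  have "(\<Inter>k<\<gamma>. A k) \<subseteq> summable_event mu \<sigma>"
  proof
    fix \<omega> assume \<omega>: "\<omega> \<in> (\<Inter>k<\<gamma>. A k)"
    then have "\<omega> \<in> space (iid_copies mu)"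
      using nonempty by (auto simp: A_def)
    have finite_blocks: "(\<Sum>m. ennreal (Lambda \<tau> (\<omega> \<circ> block_shift \<gamma> k) m)) < \<infinity>"
      if "k < \<gamma>" for k
    proof -
      have "\<omega> \<in> A k" using \<omega> that by blast
      then show ?thesis by (simp add: A_def summable_event_def)
    qed
    have "(\<Sum>n. ennreal (Lambda \<sigma> \<omega> n)) \<le> (\<Sum>k<\<gamma>. \<Sum>m. ennreal (Lambda \<sigma> \<omega> (\<gamma> * m + k)))"
      using assms(3) by (rule suminf_le_sum_residue_classes)
    also have "\<dots> \<le> (\<Sum>k<\<gamma>. \<Sum>m. ennreal (Lambda \<tau> (\<omega> \<circ> block_shift \<gamma> k) m))"
      unfolding \<tau>_def
      by (intro sum_mono suminf_le summableI ennreal_leI Lambda_le_block_shift assms(4,5))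
    also have "\<dots> < \<infinity>"
      using finite_blocks by (simp add: less_top[symmetric])
    finally show "\<omega> \<in> summable_event mu \<sigma>"
      using \<open>\<omega> \<in> space (iid_copies mu)\<close> by (simp add: summable_event_def)
  qed
  then have "measure (iid_copies mu) (\<Inter>k<\<gamma>. A k) \<le> measure (iid_copies mu) (summable_event mu \<sigma>)"
    by (intro P.finite_measure_mono summable_event_sets assms(2))
  with pos show ?thesis by (simp add: summable_wrt_iff_event)
qed

theorem lemma2p1:
  fixes mu :: "real measure" and \<sigma> :: "nat \<Rightarrow> nat" and \<gamma> :: nat
  assumes "prob_space mu" and "sets mu = sets borel"
    and "AE x in mu. x \<ge> 0"
    and "mono \<sigma>" and "\<And>n. \<sigma> n \<ge> 1"
    and "\<gamma> \<ge> 1"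
  shows "summable_wrt mu \<sigma> \<longleftrightarrow> summable_wrt mu (\<lambda>n. \<sigma> (\<gamma> * n))"
  using summable_wrt_thinned[OF assms(1,2,6)]
    summable_wrt_from_thinned[OF assms(1,2,6,4,5)] by blast

end
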